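(* Let $S=\{(a_i,b_i)\}_{i=1}^n\subset\mathbb R_{>0}\times\mathbb R_{\ge0}$ with $0<a_1<\cdots<a_n$, and let $f\in\mathbb R_{\ge0}[X]$ interpolate $S$ (i.e. $f(a_i)=b_i$ for all $i$). (1) If $\mathfrak d(f)+1\le n$, then $f$ is the unique polynomial in $\mathbb R_{\ge0}[X]$ interpolating $S$. (2) If $n\le\mathfrak d(f)$, then there are infinitely many polynomials in $\mathbb R_{\ge0}[X]$ interpolating $S$.
   Context: $\mathbb R_{\ge0}[X]$ is the set of real polynomials all of whose coefficients are nonnegative (CMPs). A finite sign sequence is $s=(s_i)_{i\in\omega}\in\{-,0,+\}^\omega$ with finitely many nonzero entries ($\omega=\{0,1,2,\dots\}$); $\mathscr S$ is their set and $\mathscr S_+=\mathscr S\cap\{0,+\}^\omega$. For $f=\sum_i c_iX^i$, $\mathrm{Sign}(f)=(\operatorname{sign}(c_i))_{i\in\omega}$. $\mathrm{SC}(t)$ is the number of pairs $i<j$ with $\{t_i,t_j\}=\{-,+\}$ and $t_k=0$ for all $i<k<j$. For $s\in\mathscr S_+$, $\mathfrak d(s)=\max\{\mathrm{SC}(t): t\in\mathscr S,\ t_i\in\{-,0,s_i\}\ \forall i\in\omega\}$, and for $f\in\mathbb R_{\ge0}[X]$, $\mathfrak d(f)=\mathfrak d(\mathrm{Sign}(f))$. *)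

theory Defs
  imports "HOL-Computational_Algebra.Polynomial"
begin

text \<open>Signs are encoded as integers: -1 for minus, 0 for zero, 1 for plus.
  A finite sign sequence is a function nat => int with values in {-1,0,1}
  and finitely many nonzero entries.\<close>

definition sign_seqs :: "(nat \<Rightarrow> int) set" where
  "sign_seqs = {t. (\<forall>i. t i \<in> {-1, 0, 1}) \<and> finite {i. t i \<noteq> 0}}"

definition sign_seqs_plus :: "(nat \<Rightarrow> int) set" where
  "sign_seqs_plus = {t \<in> sign_seqs. \<forall>i. t i \<in> {0, 1}}"

definition Sign :: "real poly \<Rightarrow> nat \<Rightarrow> int" where
  "Sign f = (\<lambda>i. if coeff f i > 0 then 1 else if coeff f i < 0 then -1 else 0)"

definition SC :: "(nat \<Rightarrow> int) \<Rightarrow> nat" where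
  "SC t = card {(i, j). i < j \<and> {t i, t j} = {-1, 1} \<and> (\<forall>k. i < k \<and> k < j \<longrightarrow> t k = 0)}"

definition dfrak :: "(nat \<Rightarrow> int) \<Rightarrow> nat" where
  "dfrak s = Max {SC t | t. t \<in> sign_seqs \<and> (\<forall>i. t i \<in> {-1, 0, s i})}"

definition dfrak_poly :: "real poly \<Rightarrow> nat" where
  "dfrak_poly f = dfrak (Sign f)"

definition CMP :: "real poly \<Rightarrow> bool" where
  "CMP f \<longleftrightarrow> (\<forall>i. coeff f i \<ge> 0)"

end

theory Submission
  imports Defs
begin

text \<open>Descartes' rule of signs bounds the number of positive roots of a nonzero polynomial by
  the number of sign changes of its coefficients. If \<open>g \<noteq> f\<close> are CMP interpolants, then
  \<open>f - g\<close> vanishes at the \<open>n\<close> positive nodes, and its coefficients can be positive only where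
  those of \<open>f\<close> are; so its sign sequence competes in the maximum defining \<open>dfrak f\<close>, whence
  \<open>n \<le> dfrak f\<close>.

  Conversely, if \<open>n \<le> dfrak f\<close>, an optimal sign sequence \<open>t\<close> contains an alternating
  subsequence of \<open>n + 1\<close> nonzero signs at positions \<open>e 0 < \<dots> < e n\<close>. Some nonzero
  polynomial \<open>h\<close> supported on these positions vanishes at the nodes, and Descartes' rule forces
  its coefficients to alternate there. Up to sign, \<open>h\<close> is therefore negative only where \<open>t\<close>,
  and hence \<open>f\<close>, is positive, so \<open>f + \<epsilon> h\<close> is a CMP interpolant for all small
  \<open>\<epsilon> > 0\<close>.\<close>

section \<open>Sign changes\<close>

definition sign_changes :: "(nat \<Rightarrow> int) \<Rightarrow> (nat \<times> nat) set" where
  "sign_changes t =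
     {(i, j). i < j \<and> {t i, t j} = {-1, 1} \<and> (\<forall>k. i < k \<and> k < j \<longrightarrow> t k = 0)}"

definition supp :: "(nat \<Rightarrow> int) \<Rightarrow> nat set" where
  "supp t = {i. t i \<noteq> 0}"

lemma SC_eq_card_sign_changes: "SC t = card (sign_changes t)"
  unfolding SC_def sign_changes_def by simp

lemma sign_changes_iff:
  "(i, j) \<in> sign_changes t \<longleftrightarrow> i < j \<and> ((t i = 1 \<and> t j = -1) \<or> (t i = -1 \<and> t j = 1))
     \<and> (\<forall>k. i < k \<and> k < j \<longrightarrow> t k = 0)"
  unfolding sign_changes_def by (auto simp: doubleton_eq_iff)

lemma sign_changesD:
  assumes "(i, j) \<in> sign_changes t"
  shows "i < j" "t i \<noteq> 0" "t j = - t i" "\<And>k. i < k \<Longrightarrow> k < j \<Longrightarrow> t k = 0"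
  using assms unfolding sign_changes_iff by auto

lemma sign_changes_subset_supp: "sign_changes t \<subseteq> supp t \<times> supp t"
  unfolding supp_def using sign_changesD by fastforce

lemma finite_sign_changes: "finite (supp t) \<Longrightarrow> finite (sign_changes t)"
  using sign_changes_subset_supp finite_subset by blast

lemma sign_changes_unique_snd: "(i, j) \<in> sign_changes t \<Longrightarrow> (i, j') \<in> sign_changes t \<Longrightarrow> j = j'"
  unfolding sign_changes_iff by (metis linorder_neqE_nat zero_neq_neg_one zero_neq_one)

lemma sign_changes_unique_fst: "(i, j) \<in> sign_changes t \<Longrightarrow> (i', j) \<in> sign_changes t \<Longrightarrow> i = i'"
  unfolding sign_changes_iff by (metis linorder_neqE_nat zero_neq_neg_one zero_neq_one)

lemma inj_on_fst_sign_changes: "inj_on fst (sign_changes t)"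
  by (auto simp: inj_on_def intro: sign_changes_unique_snd)

lemma SC_uminus: "SC (\<lambda>i. - t i) = SC t"
proof -
  have "sign_changes (\<lambda>i. - t i) = sign_changes t"
    unfolding sign_changes_def by (auto simp: doubleton_eq_iff)
  then show ?thesis unfolding SC_eq_card_sign_changes by simp
qed

lemma SC_less_card_supp:
  assumes "finite (supp t)" "supp t \<noteq> {}"
  shows "SC t < card (supp t)"
proof -
  have "fst ` sign_changes t \<subseteq> supp t - {Max (supp t)}"
  proof
    fix i assume "i \<in> fst ` sign_changes t"
    then obtain j where ij: "(i, j) \<in> sign_changes t" by auto
    then have "j \<in> supp t" using sign_changes_subset_supp by blast
    then have "j \<le> Max (supp t)" using assms(1) by simp
    then show "i \<in> supp t - {Max (supp t)}"
      using ij sign_changesD(1) sign_changes_subset_supp by fastforce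
  qed
  then have "card (sign_changes t) \<le> card (supp t - {Max (supp t)})"
    using assms(1) inj_on_fst_sign_changes by (metis card_image card_mono finite_Diff)
  also have "\<dots> < card (supp t)" using assms by (simp add: card_gt_0_iff)
  finally show ?thesis unfolding SC_eq_card_sign_changes .
qed

definition shift_seq :: "(nat \<Rightarrow> int) \<Rightarrow> nat \<Rightarrow> int" where
  "shift_seq t = (\<lambda>i. t (Suc i))"

lemma Suc_pair_sign_changes_shift:
  "map_prod Suc Suc ` sign_changes (shift_seq t) \<subseteq> sign_changes t"
proof clarify
  fix i j assume "(i, j) \<in> sign_changes (shift_seq t)"
  then show "(Suc i, Suc j) \<in> sign_changes t"
    unfolding sign_changes_iff shift_seq_def by (metis Suc_lessE Suc_less_eq)
qed

lemma inj_on_Suc_pair: "inj_on (map_prod Suc Suc) A"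
  by (auto simp: inj_on_def)

lemma SC_shift_seq_le: "finite (supp t) \<Longrightarrow> SC (shift_seq t) \<le> SC t"
  unfolding SC_eq_card_sign_changes
  by (metis Suc_pair_sign_changes_shift card_image card_mono finite_sign_changes inj_on_Suc_pair)

lemma SC_shift_seq_eq:
  assumes "t 0 = 0" "finite (supp t)"
  shows "SC (shift_seq t) = SC t"
proof -
  have "sign_changes t \<subseteq> map_prod Suc Suc ` sign_changes (shift_seq t)"
  proof clarify
    fix i j assume ij: "(i, j) \<in> sign_changes t"
    then obtain i' j' where "i = Suc i'" "j = Suc j'"
      using sign_changesD(1,2) assms(1) by (metis Suc_lessE not0_implies_Suc)
    with ij show "(i, j) \<in> map_prod Suc Suc ` sign_changes (shift_seq t)"
      by (force simp: sign_changes_iff shift_seq_def)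
  qed
  then have "sign_changes t = map_prod Suc Suc ` sign_changes (shift_seq t)"
    using Suc_pair_sign_changes_shift by blast
  then show ?thesis unfolding SC_eq_card_sign_changes
    by (simp add: card_image inj_on_Suc_pair)
qed

lemma SC_shift_seq_less:
  assumes "finite (supp t)" "t 0 \<in> {-1, 1}" "0 < j" "t j = - t 0"
    and "\<And>k. 0 < k \<Longrightarrow> k < j \<Longrightarrow> t k = 0"
  shows "SC (shift_seq t) < SC t"
proof -
  have "(0, j) \<in> sign_changes t" using assms(2-5) by (auto simp: sign_changes_iff)
  moreover have "(0, j) \<notin> map_prod Suc Suc ` sign_changes (shift_seq t)" by auto
  ultimately have "map_prod Suc Suc ` sign_changes (shift_seq t) \<subset> sign_changes t"
    using Suc_pair_sign_changes_shift by blast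
  then show ?thesis unfolding SC_eq_card_sign_changes
    by (metis assms(1) card_image finite_sign_changes inj_on_Suc_pair psubset_card_mono)
qed

lemma Sign_cases: "Sign p i \<in> {-1, 0, 1}"
  unfolding Sign_def by auto

lemma Sign_eq_0_iff: "Sign p i = 0 \<longleftrightarrow> coeff p i = 0"
  unfolding Sign_def by auto

lemma supp_Sign: "supp (Sign p) = {i. coeff p i \<noteq> 0}"
  unfolding supp_def by (simp add: Sign_eq_0_iff)

lemma finite_supp_Sign: "finite (supp (Sign p))"
proof -
  have "supp (Sign p) \<subseteq> {..degree p}"
    unfolding supp_Sign using le_degree by auto
  then show ?thesis using finite_subset by blast
qed

lemma Sign_in_sign_seqs: "Sign p \<in> sign_seqs"
  using Sign_cases finite_supp_Sign unfolding sign_seqs_def supp_def by auto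

lemma Sign_pderiv: "Sign (pderiv p) = shift_seq (Sign (p :: real poly))"
  by (auto simp: Sign_def shift_seq_def coeff_pderiv zero_less_mult_iff mult_less_0_iff)

lemma Sign_uminus: "Sign (- p) = (\<lambda>i. - Sign p i)"
  unfolding Sign_def by auto

section \<open>Descartes' rule of signs\<close>

definition pos_roots :: "real poly \<Rightarrow> real set" where
  "pos_roots p = {x. 0 < x \<and> poly p x = 0}"

lemma finite_pos_roots: "p \<noteq> 0 \<Longrightarrow> finite (pos_roots p)"
  unfolding pos_roots_def using poly_roots_finite[of p] by (rule finite_subset[rotated]) auto

lemma pos_roots_uminus: "pos_roots (- p) = pos_roots p"
  unfolding pos_roots_def by simp

lemma card_le_Suc_card_if_separated:
  fixes R S :: "'a :: linorder set"
  assumes "finite R" "finite S"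
    and "\<And>r s. r \<in> R \<Longrightarrow> s \<in> R \<Longrightarrow> r < s \<Longrightarrow> \<exists>z\<in>S. r < z \<and> z < s"
  shows "card R \<le> Suc (card S)"
  using assms
proof (induction R arbitrary: S rule: finite_linorder_max_induct)
  case empty
  then show ?case by simp
next
  case (insert b A)
  show ?case
  proof (cases "A = {}")
    case True
    then show ?thesis by simp
  next
    case False
    define a where "a = Max A"
    have a: "a \<in> A" "\<forall>r\<in>A. r \<le> a" using insert.hyps(1) False by (auto simp: a_def)
    then obtain z where z: "z \<in> S" "a < z" "z < b" using insert.prems(2) insert.hyps(2) by blast
    have "card A \<le> Suc (card (S - {z}))"
    proof (rule insert.IH)
      show "finite (S - {z})" using insert.prems(1) by simp
      fix r s assume rs: "r \<in> A" "s \<in> A" "r < s"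
      then obtain z' where "z' \<in> S" "r < z'" "z' < s" using insert.prems(2) by blast
      moreover have "s \<le> a" using a rs(2) by blast
      ultimately show "\<exists>z'\<in>S - {z}. r < z' \<and> z' < s" using z(2) by force
    qed
    moreover have "b \<notin> A" using insert.hyps(2) by blast
    moreover have "card S = Suc (card (S - {z}))" using z(1) insert.prems(1) by (metis card_Suc_Diff1)
    ultimately show ?thesis using insert.hyps(1) by simp
  qed
qed

lemma pderiv_root_between:
  fixes p :: "real poly"
  assumes "r < s" "poly p r = 0" "poly p s = 0"
  shows "\<exists>z. r < z \<and> z < s \<and> poly (pderiv p) z = 0"
  using poly_MVT[OF assms(1), of p] assms by auto

lemma card_pos_roots_le_Suc_pderiv:
  fixes p :: "real poly"
  assumes "p \<noteq> 0" "pderiv p \<noteq> 0"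
  shows "card (pos_roots p) \<le> Suc (card (pos_roots (pderiv p)))"
proof (rule card_le_Suc_card_if_separated)
  fix r s assume rs: "r \<in> pos_roots p" "s \<in> pos_roots p" "r < s"
  then obtain z where "r < z" "z < s" "poly (pderiv p) z = 0"
    using pderiv_root_between[of r s p] by (auto simp: pos_roots_def)
  with rs(1) show "\<exists>z\<in>pos_roots (pderiv p). r < z \<and> z < s"
    by (intro bexI[of _ z]) (auto simp: pos_roots_def)
qed (simp_all add: assms finite_pos_roots)

lemma poly_pos_right_of_0:
  fixes q :: "real poly"
  assumes "\<forall>i<m. coeff q i = 0" "coeff q m > 0"
  shows "\<exists>d>0. \<forall>x. 0 < x \<and> x < d \<longrightarrow> poly q x > 0"
  using assms
proof (induction m arbitrary: q)
  case 0
  have "poly q 0 > 0" using 0 by (simp add: poly_0_coeff_0)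
  moreover have "isCont (poly q) 0" by simp
  ultimately have "eventually (\<lambda>x. poly q x > 0) (at 0)"
    by (simp add: isCont_def order_tendstoD)
  then obtain d where "d > 0" "\<forall>x. x \<noteq> 0 \<and> dist x 0 < d \<longrightarrow> poly q x > 0"
    unfolding eventually_at by blast
  then show ?case by (intro exI[of _ d]) (auto simp: dist_real_def)
next
  case (Suc m)
  obtain a q' where q: "q = pCons a q'" by (cases q)
  have "a = 0" using Suc.prems(1) q by (metis coeff_pCons_0 zero_less_Suc)
  moreover have "\<forall>i<m. coeff q' i = 0" "coeff q' m > 0" using Suc.prems q by auto
  then obtain d where "d > 0" "\<forall>x. 0 < x \<and> x < d \<longrightarrow> poly q' x > 0"
    using Suc.IH by blast
  ultimately show ?case by (intro exI[of _ d]) (simp add: q)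
qed

lemma pderiv_root_below_pos_root:
  fixes p :: "real poly"
  assumes "poly p 0 > 0" "d > 0" "\<forall>x. 0 < x \<and> x < d \<longrightarrow> poly (pderiv p) x > 0"
    and "0 < s" "poly p s = 0"
  shows "\<exists>z. 0 < z \<and> z < s \<and> poly (pderiv p) z = 0"
proof -
  obtain \<xi> where \<xi>: "0 < \<xi>" "\<xi> < s" "poly p s - poly p 0 = s * poly (pderiv p) \<xi>"
    using poly_MVT[OF assms(4), of p] by auto
  then have "s * poly (pderiv p) \<xi> < 0" using assms(1,5) by simp
  then have "poly (pderiv p) \<xi> < 0" using assms(4) by (simp add: mult_less_0_iff)
  define x0 where "x0 = min (d / 2) (\<xi> / 2)"
  have "0 < x0" "x0 < \<xi>" "poly (pderiv p) x0 > 0" using assms(2,3) \<xi> by (auto simp: x0_def)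
  then obtain z where "x0 < z" "z < \<xi>" "poly (pderiv p) z = 0"
    using poly_IVT_neg \<open>poly (pderiv p) \<xi> < 0\<close> by blast
  then show ?thesis using \<open>0 < x0\<close> \<xi> by (intro exI[of _ z]) auto
qed

lemma card_pos_roots_le_pderiv:
  fixes p :: "real poly"
  assumes "pderiv p \<noteq> 0" "poly p 0 > 0"
    and "d > 0" "\<forall>x. 0 < x \<and> x < d \<longrightarrow> poly (pderiv p) x > 0"
  shows "card (pos_roots p) \<le> card (pos_roots (pderiv p))"
proof -
  have p: "p \<noteq> 0" using assms(2) by auto
  have "card (insert 0 (pos_roots p)) \<le> Suc (card (pos_roots (pderiv p)))"
  proof (rule card_le_Suc_card_if_separated)
    fix r s assume rs: "r \<in> insert 0 (pos_roots p)" "s \<in> insert 0 (pos_roots p)" "r < s"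
    then have s: "0 < s" "poly p s = 0" by (auto simp: pos_roots_def)
    show "\<exists>z\<in>pos_roots (pderiv p). r < z \<and> z < s"
    proof -
      obtain z where "r < z" "z < s" "poly (pderiv p) z = 0"
      proof (cases "r = 0")
        case True
        then show ?thesis using that pderiv_root_below_pos_root[OF assms(2-4) s] by blast
      next
        case False
        then show ?thesis
          using that rs pderiv_root_between[of r s p] by (auto simp: pos_roots_def)
      qed
      with rs show ?thesis by (intro bexI[of _ z]) (auto simp: pos_roots_def)
    qed
  qed (use assms(1) p finite_pos_roots in auto)
  moreover have "0 \<notin> pos_roots p" by (simp add: pos_roots_def)
  ultimately show ?thesis using finite_pos_roots[OF p] by simp
qed

lemma descartes_step:
  fixes p :: "real poly"
  assumes pos: "coeff p 0 > 0"
    and IH: "pderiv p \<noteq> 0 \<Longrightarrow> card (pos_roots (pderiv p)) \<le> SC (Sign (pderiv p))"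
  shows "card (pos_roots p) \<le> SC (Sign p)"
proof (cases "degree p = 0")
  case True
  then have "pos_roots p = {}" using pos by (auto simp: pos_roots_def poly_altdef)
  then show ?thesis by simp
next
  case False
  have p: "p \<noteq> 0" and d: "pderiv p \<noteq> 0" using False by (auto simp: pderiv_eq_0_iff)
  have IHd: "card (pos_roots (pderiv p)) \<le> SC (shift_seq (Sign p))"
    using IH[OF d] by (simp add: Sign_pderiv)
  define j where "j = (LEAST j. 0 < j \<and> coeff p j \<noteq> 0)"
  have "0 < degree p \<and> coeff p (degree p) \<noteq> 0" using False p by simp
  then have j: "0 < j" "coeff p j \<noteq> 0" unfolding j_def by (metis (mono_tags, lifting) LeastI)+
  have gap: "coeff p k = 0" if "0 < k" "k < j" for k
    using not_less_Least[of k "\<lambda>j. 0 < j \<and> coeff p j \<noteq> 0"] that unfolding j_def by blast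
  show ?thesis
  proof (cases "coeff p j < 0")
    case True
    have "SC (shift_seq (Sign p)) < SC (Sign p)"
      by (rule SC_shift_seq_less[OF finite_supp_Sign, where j = j]) (use pos True j gap in \<open>auto simp: Sign_def\<close>)
    moreover have "card (pos_roots p) \<le> Suc (card (pos_roots (pderiv p)))"
      using card_pos_roots_le_Suc_pderiv[OF p d] .
    ultimately show ?thesis using IHd by linarith
  next
    case False
    then have "coeff p j > 0" using j(2) by linarith
    then have "\<forall>i<j - 1. coeff (pderiv p) i = 0" "coeff (pderiv p) (j - 1) > 0"
      using j(1) gap by (auto simp: coeff_pderiv)
    then obtain \<delta> where "\<delta> > 0" "\<forall>x. 0 < x \<and> x < \<delta> \<longrightarrow> poly (pderiv p) x > 0"
      using poly_pos_right_of_0 by blast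
    then have "card (pos_roots p) \<le> card (pos_roots (pderiv p))"
      using card_pos_roots_le_pderiv[OF d] pos by (simp add: poly_0_coeff_0)
    then show ?thesis using IHd SC_shift_seq_le[OF finite_supp_Sign] by (meson le_trans)
  qed
qed

theorem descartes_rule_of_signs:
  fixes p :: "real poly"
  assumes "p \<noteq> 0"
  shows "card (pos_roots p) \<le> SC (Sign p)"
  using assms
proof (induction "degree p" arbitrary: p rule: less_induct)
  case less
  have IH: "card (pos_roots (pderiv q)) \<le> SC (Sign (pderiv q))"
    if "pderiv q \<noteq> 0" "degree q = degree p" for q
    using less.hyps[of "pderiv q"] that by (simp add: degree_pderiv pderiv_eq_0_iff)
  consider "coeff p 0 = 0" | "coeff p 0 > 0" | "coeff (- p) 0 > 0" by force
  then show ?case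
  proof cases
    case 1
    obtain q where p: "p = pCons 0 q" using 1 by (cases p) simp
    then have q: "q \<noteq> 0" "degree q < degree p" using less.prems by auto
    have "pos_roots p = pos_roots q" by (auto simp: pos_roots_def p)
    moreover have "Sign q = shift_seq (Sign p)" by (auto simp: Sign_def shift_seq_def p)
    moreover have "SC (shift_seq (Sign p)) = SC (Sign p)"
      by (rule SC_shift_seq_eq) (use 1 finite_supp_Sign in \<open>auto simp: Sign_def\<close>)
    ultimately show ?thesis using less.hyps[OF q(2,1)] by simp
  next
    case 2
    then show ?thesis using descartes_step IH by blast
  next
    case 3
    have "card (pos_roots (- p)) \<le> SC (Sign (- p))"
      by (rule descartes_step[OF 3]) (use IH[of "- p"] in simp)
    then show ?thesis by (simp add: pos_roots_uminus Sign_uminus SC_uminus)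
  qed
qed

lemma card_le_card_pos_roots:
  fixes p :: "real poly" and x :: "nat \<Rightarrow> real"
  assumes "p \<noteq> 0" "inj_on x {1..m}" "\<forall>j\<in>{1..m}. 0 < x j \<and> poly p (x j) = 0"
  shows "m \<le> card (pos_roots p)"
proof -
  have "x ` {1..m} \<subseteq> pos_roots p" using assms(3) unfolding pos_roots_def by auto
  then have "card (x ` {1..m}) \<le> card (pos_roots p)"
    using finite_pos_roots[OF assms(1)] by (rule card_mono[rotated])
  then show ?thesis using assms(2) by (simp add: card_image)
qed

lemma card_pos_roots_less_card_support:
  fixes p :: "real poly"
  assumes "p \<noteq> 0" "finite A" "{i. coeff p i \<noteq> 0} \<subseteq> A"
  shows "card (pos_roots p) < card A"
proof -
  have "degree p \<in> supp (Sign p)" using assms(1) by (simp add: supp_Sign)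
  then have "SC (Sign p) < card (supp (Sign p))"
    using SC_less_card_supp[OF finite_supp_Sign] by blast
  also have "\<dots> \<le> card A" using assms(2,3) by (intro card_mono) (auto simp: supp_Sign)
  finally show ?thesis using descartes_rule_of_signs[OF assms(1)] by linarith
qed

section \<open>Uniqueness\<close>

definition admissible :: "(nat \<Rightarrow> int) \<Rightarrow> (nat \<Rightarrow> int) \<Rightarrow> bool" where
  "admissible s t \<longleftrightarrow> t \<in> sign_seqs \<and> (\<forall>i. t i \<in> {-1, 0, s i})"

lemma dfrak_eq_Max: "dfrak s = Max (SC ` {t. admissible s t})"
  unfolding dfrak_def admissible_def by (intro arg_cong[where f = Max]) auto

text \<open>Every sign change of an admissible sequence has a \<open>+\<close> at one end, and each \<open>+\<close>
  of \<open>s\<close> is the left end of at most one and the right end of at most one sign change.\<close>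
lemma SC_le_twice_card_plus:
  assumes "finite {i. s i = 1}" "admissible s t"
  shows "SC t \<le> 2 * card {i. s i = 1}"
proof -
  let ?K = "{i. s i = 1}"
  define plus_end where "plus_end = (\<lambda>(i::nat, j::nat). if t i = 1 then (i, True) else (j, False))"
  have image: "plus_end ` sign_changes t \<subseteq> ?K \<times> UNIV"
  proof
    fix z assume "z \<in> plus_end ` sign_changes t"
    then obtain i j where ij: "(i, j) \<in> sign_changes t" "z = plus_end (i, j)" by auto
    then have "t i = 1 \<or> t j = 1" unfolding sign_changes_iff by auto
    moreover have "s k = 1" if "t k = 1" for k
    proof -
      have "t k \<in> {-1, 0, s k}" using assms(2) by (simp add: admissible_def)
      then show ?thesis using that by auto
    qed
    ultimately show "z \<in> ?K \<times> UNIV" using ij(2) unfolding plus_end_def by auto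
  qed
  have inj: "inj_on plus_end (sign_changes t)"
  proof (rule inj_onI)
    fix x y assume xy: "x \<in> sign_changes t" "y \<in> sign_changes t" "plus_end x = plus_end y"
    obtain i j i' j' where [simp]: "x = (i, j)" "y = (i', j')" by (cases x, cases y)
    have "i = i' \<or> j = j'" using xy(3) unfolding plus_end_def by (auto split: if_splits)
    then show "x = y" using xy(1,2) sign_changes_unique_snd sign_changes_unique_fst by auto
  qed
  have "card (sign_changes t) = card (plus_end ` sign_changes t)" using inj by (simp add: card_image)
  also have "\<dots> \<le> card (?K \<times> (UNIV :: bool set))"
    using image assms(1) by (intro card_mono) auto
  finally show ?thesis by (simp add: SC_eq_card_sign_changes card_cartesian_product)
qed

lemma finite_SC_admissible:
  assumes "finite {i. s i = 1}"
  shows "finite (SC ` {t. admissible s t})"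
proof -
  have "SC ` {t. admissible s t} \<subseteq> {..2 * card {i. s i = 1}}"
    using SC_le_twice_card_plus[OF assms] by auto
  then show ?thesis by (rule finite_subset) simp
qed

lemma SC_le_dfrak:
  assumes "finite {i. s i = 1}" "admissible s t"
  shows "SC t \<le> dfrak s"
  unfolding dfrak_eq_Max using assms(2) by (intro Max_ge[OF finite_SC_admissible[OF assms(1)]]) simp

lemma dfrak_attained:
  assumes "finite {i. s i = 1}"
  obtains t where "admissible s t" "SC t = dfrak s"
proof -
  have "admissible s (\<lambda>_. 0)" unfolding admissible_def sign_seqs_def by auto
  then have "SC ` {t. admissible s t} \<noteq> {}" by blast
  from Max_in[OF finite_SC_admissible[OF assms] this] obtain t
    where "admissible s t" "SC t = Max (SC ` {t. admissible s t})" by auto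
  then show ?thesis using that unfolding dfrak_eq_Max by blast
qed

lemma finite_plus_Sign: "finite {i. Sign p i = 1}"
  using finite_supp_Sign[of p] by (rule finite_subset[rotated]) (auto simp: supp_def)

lemma admissible_Sign_diff:
  assumes "CMP f" "CMP g"
  shows "admissible (Sign f) (Sign (f - g))"
proof -
  have "Sign (f - g) i \<in> {-1, 0, Sign f i}" for i
  proof (cases "coeff f i > 0")
    case True
    then have "Sign f i = 1" by (simp add: Sign_def)
    then show ?thesis using Sign_cases[of "f - g" i] by simp
  next
    case False
    moreover have "coeff f i \<ge> 0" using assms(1) by (simp add: CMP_def)
    ultimately have "coeff f i = 0" by linarith
    moreover have "coeff g i \<ge> 0" using assms(2) by (simp add: CMP_def)
    ultimately show ?thesis by (simp add: Sign_def)
  qed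
  then show ?thesis unfolding admissible_def using Sign_in_sign_seqs by auto
qed

theorem CMP_interpolant_unique:
  fixes f g :: "real poly" and x :: "nat \<Rightarrow> real"
  assumes "CMP f" "CMP g" "inj_on x {1..n}" "\<forall>j\<in>{1..n}. 0 < x j \<and> poly g (x j) = poly f (x j)"
    and "dfrak_poly f < n"
  shows "g = f"
proof (rule ccontr)
  assume "g \<noteq> f"
  then have h: "f - g \<noteq> 0" by simp
  have "n \<le> card (pos_roots (f - g))"
    using card_le_card_pos_roots[OF h assms(3)] assms(4) by simp
  also have "\<dots> \<le> SC (Sign (f - g))" using descartes_rule_of_signs[OF h] .
  also have "\<dots> \<le> dfrak_poly f"
    unfolding dfrak_poly_def using SC_le_dfrak[OF finite_plus_Sign admissible_Sign_diff[OF assms(1,2)]] .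
  finally show False using assms(5) by simp
qed

section \<open>Infinitely many interpolants\<close>

definition alternating_chain :: "(nat \<Rightarrow> int) \<Rightarrow> nat \<Rightarrow> (nat \<Rightarrow> nat) \<Rightarrow> bool" where
  "alternating_chain t n e \<longleftrightarrow>
     strict_mono e \<and> (\<forall>k\<le>n. t (e k) \<noteq> 0) \<and> (\<forall>k<n. t (e (Suc k)) = - t (e k))"

lemma alternating_chain_singleton: "t M \<noteq> 0 \<Longrightarrow> alternating_chain t 0 (\<lambda>k. M + k)"
  by (simp add: alternating_chain_def strict_mono_def)

lemma alternating_chain_extend:
  assumes "alternating_chain t m e" "e m < M" "t M \<noteq> 0"
    and n: "n = Suc m \<and> t M = - t (e m) \<or> n = m \<and> t M = t (e m)"
  shows "alternating_chain t n (\<lambda>k. if k < n then e k else M + (k - n))"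
    (is "alternating_chain t n ?e")
proof -
  have e: "strict_mono e" "\<And>k. k \<le> m \<Longrightarrow> t (e k) \<noteq> 0" "\<And>k. k < m \<Longrightarrow> t (e (Suc k)) = - t (e k)"
    using assms(1) unfolding alternating_chain_def by auto
  have "?e k < ?e (Suc k)" for k
  proof -
    consider "Suc k < n" | "Suc k = n" | "n \<le> k" by linarith
    then show ?thesis
    proof cases
      case 1
      then show ?thesis using e(1) by (simp add: strict_mono_Suc_iff)
    next
      case 2
      then have "e k \<le> e m" using n e(1) by (auto simp: strict_mono_less_eq)
      then show ?thesis using 2 assms(2) by simp
    qed simp
  qed
  moreover have "t (?e k) \<noteq> 0" if "k \<le> n" for k
    using that n assms(3) e(2) by auto
  moreover have "t (?e (Suc k)) = - t (?e k)" if "k < n" for k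
  proof (cases "Suc k < n")
    case True
    then show ?thesis using n e(3) by auto
  next
    case False
    then have "Suc k = n" using that by simp
    then show ?thesis using n e(3)[of k] by auto
  qed
  ultimately show ?thesis unfolding alternating_chain_def strict_mono_Suc_iff by blast
qed

lemma alternating_chain_upd_0:
  assumes "alternating_chain (t(M := 0)) n e"
  shows "alternating_chain t n e"
proof -
  have eq: "(t(M := 0)) (e k) = t (e k)" if "k \<le> n" for k
    using assms that unfolding alternating_chain_def by (cases "e k = M") auto
  show ?thesis using assms unfolding alternating_chain_def
    by (metis eq Suc_leI less_imp_le_nat)
qed

lemma sign_seqs_upd_0: "t \<in> sign_seqs \<Longrightarrow> t(M := 0) \<in> sign_seqs"
  unfolding sign_seqs_def by (auto elim: finite_subset[rotated])

lemma supp_upd_0: "supp (t(M := 0)) = supp t - {M}"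
  by (auto simp: supp_def)

lemma Max_supp_upd_Max:
  assumes fin: "finite (supp t)" and M_def: "M = Max (supp t)"
    and ne: "supp (t(M := 0)) \<noteq> {}" and p_def: "p = Max (supp (t(M := 0)))"
  shows "t p \<noteq> 0" "p < M"
proof -
  have "finite (supp (t(M := 0)))" using fin by (simp add: supp_upd_0)
  then have "p \<in> supp (t(M := 0))" unfolding p_def using ne by (rule Max_in)
  then have "p \<in> supp t" "p \<noteq> M" by (auto simp: supp_upd_0)
  moreover have "p \<le> M" unfolding M_def using fin \<open>p \<in> supp t\<close> by (rule Max_ge)
  ultimately show "t p \<noteq> 0" "p < M" by (auto simp: supp_def)
qed

lemma supp_upd_Max_nonempty:
  assumes "finite (supp t)" "0 < SC t"
  shows "supp (t(Max (supp t) := 0)) \<noteq> {}"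
proof -
  have "sign_changes t \<noteq> {}" using assms(2) unfolding SC_eq_card_sign_changes by auto
  then obtain i j where ij: "(i, j) \<in> sign_changes t" by auto
  then have "i \<in> supp t" "j \<in> supp t" "i < j" using sign_changes_subset_supp sign_changesD(1) by auto
  moreover have "j \<le> Max (supp t)" using assms(1) \<open>j \<in> supp t\<close> by simp
  ultimately have "i \<in> supp t - {Max (supp t)}" by auto
  then show ?thesis by (auto simp: supp_upd_0)
qed

text \<open>Deleting the last nonzero entry \<open>t M\<close> destroys at most the sign change between \<open>M\<close>
  and the preceding nonzero entry \<open>p\<close>.\<close>
lemma SC_remove_Max:
  assumes fin: "finite (supp t)" and M_def: "M = Max (supp t)"
    and ne: "supp (t(M := 0)) \<noteq> {}" and p_def: "p = Max (supp (t(M := 0)))"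
  shows "SC t \<le> Suc (SC (t(M := 0)))" "t M = t p \<Longrightarrow> SC t \<le> SC (t(M := 0))"
proof -
  have p: "t p \<noteq> 0" "p < M" using Max_supp_upd_Max[OF assms] by auto
  have fin': "finite (supp (t(M := 0)))" using fin by (simp add: supp_upd_0)
  have incl: "sign_changes t \<subseteq> insert (p, M) (sign_changes (t(M := 0)))"
  proof
    fix x assume x: "x \<in> sign_changes t"
    obtain i j where ij [simp]: "x = (i, j)" by (cases x)
    have i: "i \<in> supp t" and j: "j \<in> supp t" using x sign_changes_subset_supp by auto
    have "j \<le> M" unfolding M_def using fin j by (rule Max_ge)
    show "x \<in> insert (p, M) (sign_changes (t(M := 0)))"
    proof (cases "j = M")
      case True
      then have "i \<in> supp (t(M := 0))" using i x sign_changesD(1) by (fastforce simp: supp_upd_0)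
      then have "i \<le> p" unfolding p_def using fin' by (rule Max_ge[rotated])
      moreover have "\<not> i < p" using x True p sign_changesD(4)[of i j t p] by auto
      ultimately show ?thesis using True by simp
    next
      case False
      then have "j < M" using \<open>j \<le> M\<close> by simp
      then show ?thesis using x by (auto simp: sign_changes_iff)
    qed
  qed
  have fin_changes: "finite (sign_changes (t(M := 0)))" using finite_sign_changes[OF fin'] .
  have "card (sign_changes t) \<le> card (insert (p, M) (sign_changes (t(M := 0))))"
    using incl fin_changes by (intro card_mono) auto
  also have "\<dots> \<le> Suc (card (sign_changes (t(M := 0))))" by (simp add: card_insert_if fin_changes)
  finally show "SC t \<le> Suc (SC (t(M := 0)))" unfolding SC_eq_card_sign_changes .
  assume "t M = t p"
  then have "(p, M) \<notin> sign_changes t" using p(1) sign_changesD(3) by force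
  then have "card (sign_changes t) \<le> card (sign_changes (t(M := 0)))"
    using incl fin_changes by (intro card_mono) auto
  then show "SC t \<le> SC (t(M := 0))" unfolding SC_eq_card_sign_changes .
qed

text \<open>Induction on the support: the last nonzero entry either has the opposite sign of the
  preceding one, and is appended to a chain for the sequence without it, or has the same sign
  and replaces the last element of such a chain.\<close>
lemma alternating_chain_exists:
  assumes "t \<in> sign_seqs" "supp t \<noteq> {}" "n \<le> SC t"
  shows "\<exists>e. alternating_chain t n e \<and> e n = Max (supp t)"
  using assms
proof (induction "card (supp t)" arbitrary: t n rule: less_induct)
  case less
  define M where "M = Max (supp t)"
  define t' where "t' = t(M := 0)"
  have fin: "finite (supp t)" using less.prems(1) by (simp add: sign_seqs_def supp_def)
  have "M \<in> supp t" unfolding M_def using fin less.prems(2) by (rule Max_in)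
  then have tM: "t M \<noteq> 0" by (simp add: supp_def)
  show ?case
  proof (cases "n = 0")
    case True
    then show ?thesis using alternating_chain_singleton[of t M, OF tM] unfolding M_def by fastforce
  next
    case False
    have ne': "supp t' \<noteq> {}"
      using supp_upd_Max_nonempty[OF fin] less.prems(3) False unfolding t'_def M_def by simp
    define p where "p = Max (supp t')"
    have p: "t p \<noteq> 0" "p < M"
      using Max_supp_upd_Max[OF fin M_def] ne' unfolding p_def t'_def by auto
    have IH: "\<exists>e. alternating_chain t m e \<and> e m = p" if m: "m \<le> SC t'" for m
    proof -
      have "card (supp t') < card (supp t)"
        using fin \<open>M \<in> supp t\<close> unfolding t'_def supp_upd_0 by (rule card_Diff1_less)
      then obtain e where "alternating_chain t' m e" "e m = p"
        using less.hyps[of t' m] sign_seqs_upd_0[OF less.prems(1)] ne' m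
        unfolding p_def t'_def by blast
      then show ?thesis using alternating_chain_upd_0 unfolding t'_def by blast
    qed
    have SC_t': "SC t \<le> Suc (SC t')" "t M = t p \<Longrightarrow> SC t \<le> SC t'"
      using SC_remove_Max[OF fin M_def] ne' unfolding p_def t'_def by auto
    have "t p \<in> {-1, 1}" "t M \<in> {-1, 1}"
      using less.prems(1) p(1) tM unfolding sign_seqs_def by auto
    then consider (same) "t M = t p" | (flip) "t M = - t p" by auto
    then show ?thesis
    proof cases
      case same
      then obtain e where e: "alternating_chain t n e" "e n = p"
        using IH SC_t'(2) less.prems(3) by (meson le_trans)
      show ?thesis
        using alternating_chain_extend[OF e(1) _ tM, of n] p e(2) same
        by (intro exI[of _ "\<lambda>k. if k < n then e k else M + (k - n)"]) (simp add: M_def)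
    next
      case flip
      have "n - 1 \<le> SC t'" using SC_t'(1) less.prems(3) by linarith
      then obtain e where e: "alternating_chain t (n - 1) e" "e (n - 1) = p" using IH by blast
      show ?thesis
        using alternating_chain_extend[OF e(1) _ tM, of n] p e(2) flip False
        by (intro exI[of _ "\<lambda>k. if k < n then e k else M + (k - n)"]) (simp add: M_def)
    qed
  qed
qed

lemma exists_poly_supported_with_roots_Suc:
  fixes x :: "nat \<Rightarrow> real"
  assumes e: "strict_mono e" and x: "\<forall>j\<in>{1..m}. 0 < x j" "inj_on x {1..m}"
    and h1: "{i. coeff h1 i \<noteq> 0} \<subseteq> e ` {0..m}" "h1 \<noteq> 0" "\<forall>j\<in>{1..m}. poly h1 (x j) = 0"
    and h2: "{i. coeff h2 i \<noteq> 0} \<subseteq> e ` {1..Suc m}" "h2 \<noteq> 0" "\<forall>j\<in>{1..m}. poly h2 (x j) = 0"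
  shows "\<exists>h. h \<noteq> 0 \<and> {i. coeff h i \<noteq> 0} \<subseteq> e ` {0..Suc m} \<and> (\<forall>j\<in>{1..Suc m}. poly h (x j) = 0)"
proof -
  define y where "y = x (Suc m)"
  have nodes: "{1..Suc m} = insert (Suc m) {1..m}" by auto
  have mono: "e ` {0..m} \<subseteq> e ` {0..Suc m}" "e ` {1..Suc m} \<subseteq> e ` {0..Suc m}" by auto
  show ?thesis
  proof (cases "poly h1 y = 0")
    case True
    then have "\<forall>j\<in>{1..Suc m}. poly h1 (x j) = 0" using h1(3) unfolding nodes y_def by blast
    then show ?thesis using h1(1,2) mono by blast
  next
    case False
    define h where "h = smult (poly h2 y) h1 - smult (poly h1 y) h2"
    txt \<open>Were \<open>h\<close> zero, \<open>h2\<close> would be a multiple of \<open>h1\<close>, hence supported on the \<open>m\<close>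
      positions \<open>e 1, \<dots>, e m\<close> while having \<open>m\<close> positive roots.\<close>
    have "h \<noteq> 0"
    proof
      assume "h = 0"
      then have "smult (poly h2 y) h1 = smult (poly h1 y) h2" by (simp add: h_def)
      then have "poly h2 y * coeff h1 i = poly h1 y * coeff h2 i" for i by (metis coeff_smult)
      then have "coeff h1 i \<noteq> 0" if "coeff h2 i \<noteq> 0" for i
        using False that by (metis mult_eq_0_iff mult_zero_right)
      then have "{i. coeff h2 i \<noteq> 0} \<subseteq> e ` {0..m} \<inter> e ` {1..Suc m}" using h1(1) h2(1) by blast
      also have "\<dots> = e ` {1..m}"
        using strict_mono_imp_inj_on[OF e] by (auto simp: image_Int[symmetric])
      finally have "card (pos_roots h2) < card (e ` {1..m})"
        using card_pos_roots_less_card_support[OF h2(2)] by blast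
      also have "\<dots> \<le> m" using card_image_le[of "{1..m}" e] by simp
      finally show False using card_le_card_pos_roots h2(2,3) x by fastforce
    qed
    moreover have "{i. coeff h i \<noteq> 0} \<subseteq> e ` {0..Suc m}"
    proof
      fix i assume "i \<in> {i. coeff h i \<noteq> 0}"
      then have "coeff h1 i \<noteq> 0 \<or> coeff h2 i \<noteq> 0" by (auto simp: h_def)
      then show "i \<in> e ` {0..Suc m}" using h1(1) h2(1) mono by blast
    qed
    moreover have "\<forall>j\<in>{1..Suc m}. poly h (x j) = 0"
      using h1(3) h2(3) unfolding nodes by (auto simp: h_def y_def)
    ultimately show ?thesis by blast
  qed
qed

lemma exists_poly_supported_with_roots:
  fixes x :: "nat \<Rightarrow> real"
  assumes "strict_mono e" "\<forall>j\<in>{1..m}. 0 < x j" "inj_on x {1..m}"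
  shows "\<exists>h. h \<noteq> 0 \<and> {i. coeff h i \<noteq> 0} \<subseteq> e ` {0..m} \<and> (\<forall>j\<in>{1..m}. poly h (x j) = 0)"
  using assms
proof (induction m arbitrary: e)
  case 0
  show ?case by (intro exI[of _ "monom 1 (e 0)"]) (auto simp: coeff_monom split: if_splits)
next
  case (Suc m)
  have x: "\<forall>j\<in>{1..m}. 0 < x j" "inj_on x {1..m}" using Suc.prems(2,3) by (auto simp: inj_on_def)
  have "strict_mono (\<lambda>k. e (Suc k))" using Suc.prems(1) by (simp add: strict_mono_def)
  from Suc.IH[OF this x] obtain h2 where
    h2: "h2 \<noteq> 0" "{i. coeff h2 i \<noteq> 0} \<subseteq> (\<lambda>k. e (Suc k)) ` {0..m}"
      "\<forall>j\<in>{1..m}. poly h2 (x j) = 0"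
    by blast
  have "(\<lambda>k. e (Suc k)) ` {0..m} = e ` {1..Suc m}"
    using image_image[of e Suc "{0..m}"] image_Suc_atLeastAtMost[of 0 m] by simp
  with h2(2) have "{i. coeff h2 i \<noteq> 0} \<subseteq> e ` {1..Suc m}" by simp
  moreover obtain h1 where
    "h1 \<noteq> 0" "{i. coeff h1 i \<noteq> 0} \<subseteq> e ` {0..m}" "\<forall>j\<in>{1..m}. poly h1 (x j) = 0"
    using Suc.IH[OF Suc.prems(1) x] by blast
  ultimately show ?case
    using exists_poly_supported_with_roots_Suc[OF Suc.prems(1) x] h2(1,3) by blast
qed

lemma sign_changes_consecutive:
  assumes "strict_mono e" "supp t = e ` {0..m}" "m \<le> SC t" "k < m"
  shows "(e k, e (Suc k)) \<in> sign_changes t"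
proof -
  let ?X = "(\<lambda>k. (e k, e (Suc k))) ` {..<m}"
  have "sign_changes t \<subseteq> ?X"
  proof
    fix x assume x: "x \<in> sign_changes t"
    then obtain i j where [simp]: "x = (i, j)" by (cases x)
    have "i \<in> supp t" "j \<in> supp t" using x sign_changes_subset_supp by auto
    then obtain k' l where kl: "k' \<le> m" "l \<le> m" "i = e k'" "j = e l" using assms(2) by auto
    then have "k' < l" using sign_changesD(1)[OF x[simplified]] assms(1) by (simp add: strict_mono_less)
    moreover have "\<not> Suc k' < l"
    proof
      assume "Suc k' < l"
      then have "t (e (Suc k')) = 0" using x kl assms(1) sign_changesD(4) by (simp add: strict_mono_less)
      moreover have "e (Suc k') \<in> supp t" using assms(2) \<open>Suc k' < l\<close> kl(2) by auto
      ultimately show False by (simp add: supp_def)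
    qed
    ultimately have "l = Suc k'" by simp
    then show "x \<in> ?X" using kl by (intro image_eqI[of _ _ k']) auto
  qed
  moreover have "card ?X \<le> card (sign_changes t)"
    using card_image_le[of "{..<m}" "\<lambda>k. (e k, e (Suc k))"] assms(3)
    unfolding SC_eq_card_sign_changes by simp
  ultimately have "sign_changes t = ?X" by (intro card_seteq) auto
  then show ?thesis using assms(4) by auto
qed


text \<open>A polynomial with \<open>m\<close> positive roots and at most \<open>m + 1\<close> monomials has exactly
  \<open>m + 1\<close> monomials, and by Descartes' rule consecutive ones have opposite signs.\<close>
lemma alternating_chain_Sign:
  fixes p :: "real poly"
  assumes "p \<noteq> 0" "strict_mono e" "{i. coeff p i \<noteq> 0} \<subseteq> e ` {0..m}" "m \<le> card (pos_roots p)"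
  shows "alternating_chain (Sign p) m e"
proof -
  have "{i. coeff p i \<noteq> 0} = e ` {0..m}"
  proof (rule card_seteq)
    have "card (e ` {0..m}) \<le> Suc m" using card_image_le[of "{0..m}" e] by simp
    also have "Suc m \<le> card {i. coeff p i \<noteq> 0}"
      using card_pos_roots_less_card_support[OF assms(1) _ order_refl] assms(3,4)
      by (meson finite_imageI finite_atLeastAtMost finite_subset less_eq_Suc_le order_le_less_trans)
    finally show "card (e ` {0..m}) \<le> card {i. coeff p i \<noteq> 0}" .
  qed (use assms(3) in simp_all)
  then have supp: "supp (Sign p) = e ` {0..m}" by (simp add: supp_Sign)
  have "m \<le> SC (Sign p)" using assms(4) descartes_rule_of_signs[OF assms(1)] by linarith
  then have "Sign p (e (Suc k)) = - Sign p (e k)" if "k < m" for k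
    using sign_changes_consecutive[OF assms(2) supp _ that] sign_changesD(3) by blast
  moreover have "Sign p (e k) \<noteq> 0" if "k \<le> m" for k
    using supp that by (auto simp: supp_def)
  ultimately show ?thesis using assms(2) unfolding alternating_chain_def by blast
qed

lemma alternating_chains_agree:
  assumes "alternating_chain u n e" "alternating_chain v n e"
    and "\<forall>i. u i \<in> {-1, 0, 1}" "\<forall>i. v i \<in> {-1, 0, 1}"
  shows "(\<forall>k\<le>n. v (e k) = u (e k)) \<or> (\<forall>k\<le>n. v (e k) = - u (e k))"
proof -
  define \<sigma> where "\<sigma> = u (e 0) * v (e 0)"
  have prod: "u (e k) * v (e k) = \<sigma>" if "k \<le> n" for k
    using that
  proof (induction k)
    case (Suc k)
    then show ?case using assms(1,2) unfolding alternating_chain_def by simp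
  qed (simp add: \<sigma>_def)
  have unit: "u (e k) \<in> {-1, 1}" "v (e k) \<in> {-1, 1}" if "k \<le> n" for k
    using assms that unfolding alternating_chain_def by auto
  have v: "v (e k) = \<sigma> * u (e k)" if "k \<le> n" for k
  proof -
    have "u (e k) * u (e k) = 1" using unit(1)[OF that] by auto
    then have "v (e k) = u (e k) * (u (e k) * v (e k))" by (metis mult.assoc mult_1)
    then show ?thesis using prod[OF that] by simp
  qed
  have "\<sigma> = 1 \<or> \<sigma> = -1" using unit[of 0] unfolding \<sigma>_def by auto
  then show ?thesis using v by auto
qed

lemma exists_poly_opposite_on_chain:
  fixes x :: "nat \<Rightarrow> real"
  assumes "t \<in> sign_seqs" "alternating_chain t n e" "\<forall>j\<in>{1..n}. 0 < x j" "inj_on x {1..n}"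
  shows "\<exists>h. h \<noteq> 0 \<and> (\<forall>j\<in>{1..n}. poly h (x j) = 0)
           \<and> (\<forall>i. coeff h i \<noteq> 0 \<longrightarrow> (\<exists>k\<le>n. i = e k \<and> Sign h i = - t i))"
proof -
  have "strict_mono e" using assms(2) unfolding alternating_chain_def by simp
  then obtain h0 where h0: "h0 \<noteq> 0" "{i. coeff h0 i \<noteq> 0} \<subseteq> e ` {0..n}"
    "\<forall>j\<in>{1..n}. poly h0 (x j) = 0"
    using exists_poly_supported_with_roots assms(3,4) by blast
  have "n \<le> card (pos_roots h0)" using card_le_card_pos_roots h0(1,3) assms(3,4) by blast
  then have "alternating_chain (Sign h0) n e"
    using alternating_chain_Sign h0(1,2) \<open>strict_mono e\<close> by blast
  then have "(\<forall>k\<le>n. Sign h0 (e k) = t (e k)) \<or> (\<forall>k\<le>n. Sign h0 (e k) = - t (e k))"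
    using alternating_chains_agree[OF assms(2)] Sign_cases assms(1) unfolding sign_seqs_def by blast
  then obtain h where h: "h = h0 \<or> h = - h0" and Sh: "\<forall>k\<le>n. Sign h (e k) = - t (e k)"
    by (metis Sign_uminus)
  have "\<exists>k\<le>n. i = e k \<and> Sign h i = - t i" if "coeff h i \<noteq> 0" for i
    using that h h0(2) Sh by fastforce
  moreover have "h \<noteq> 0" "\<forall>j\<in>{1..n}. poly h (x j) = 0" using h h0(1,3) by auto
  ultimately show ?thesis by blast
qed

lemma exists_CMP_direction:
  fixes f :: "real poly" and x :: "nat \<Rightarrow> real"
  assumes "\<forall>j\<in>{1..n}. 0 < x j" "inj_on x {1..n}" "n \<le> dfrak_poly f"
  shows "\<exists>h. h \<noteq> 0 \<and> (\<forall>j\<in>{1..n}. poly h (x j) = 0) \<and> (\<forall>i. coeff h i < 0 \<longrightarrow> 0 < coeff f i)"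
proof (cases "n = 0")
  case True
  then show ?thesis by (intro exI[of _ 1]) simp
next
  case False
  obtain t where t: "admissible (Sign f) t" "SC t = dfrak (Sign f)"
    using dfrak_attained[OF finite_plus_Sign] by blast
  then have t_seq: "t \<in> sign_seqs" and "n \<le> SC t"
    using assms(3) unfolding admissible_def dfrak_poly_def by auto
  then have "supp t \<noteq> {}"
    using False sign_changes_subset_supp[of t] unfolding SC_eq_card_sign_changes by fastforce
  then obtain e where "alternating_chain t n e"
    using alternating_chain_exists[OF t_seq _ \<open>n \<le> SC t\<close>] by blast
  then obtain h where h: "h \<noteq> 0" "\<forall>j\<in>{1..n}. poly h (x j) = 0"
    and Sh: "\<And>i. coeff h i \<noteq> 0 \<Longrightarrow> Sign h i = - t i"
    using exists_poly_opposite_on_chain[OF t_seq _ assms(1,2)] by metis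
  have "0 < coeff f i" if "coeff h i < 0" for i
  proof -
    have "Sign h i = -1" using that by (simp add: Sign_def)
    then have "t i = 1" using Sh that by fastforce
    moreover have "t i \<in> {-1, 0, Sign f i}" using t(1) unfolding admissible_def by blast
    ultimately show ?thesis by (auto simp: Sign_def split: if_splits)
  qed
  then show ?thesis using h by blast
qed

text \<open>\<open>Min R\<close> is the largest step for which no negative coefficient of \<open>h\<close> makes a
  coefficient of \<open>f + \<epsilon> h\<close> negative; the element 1 only keeps \<open>R\<close> nonempty.\<close>
lemma infinite_CMP_perturbations:
  fixes f h :: "real poly"
  assumes "CMP f" "h \<noteq> 0" "\<forall>i. coeff h i < 0 \<longrightarrow> 0 < coeff f i"
  shows "infinite {g. CMP g \<and> (\<forall>z. poly h z = 0 \<longrightarrow> poly g z = poly f z)}"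
proof -
  define R where "R = insert 1 ((\<lambda>i. coeff f i / - coeff h i) ` {i. coeff h i < 0})"
  have "{i. coeff h i < 0} \<subseteq> {..degree h}" using le_degree by force
  then have fin: "finite R" unfolding R_def by (simp add: finite_subset)
  have "\<forall>r\<in>R. 0 < r" unfolding R_def using assms(3) by (auto simp: divide_pos_neg)
  then have "0 < Min R" using fin by (simp add: R_def)
  have CMP: "CMP (f + smult \<epsilon> h)" if "0 < \<epsilon>" "\<epsilon> \<le> Min R" for \<epsilon>
    unfolding CMP_def
  proof
    fix i
    show "coeff (f + smult \<epsilon> h) i \<ge> 0"
    proof (cases "coeff h i < 0")
      case True
      then have "Min R \<le> coeff f i / - coeff h i" using fin by (intro Min_le) (auto simp: R_def)
      then have "\<epsilon> \<le> coeff f i / - coeff h i" using that(2) by (rule order_trans[rotated])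
      then have "\<epsilon> * - coeff h i \<le> coeff f i" by (subst (asm) pos_le_divide_eq) (use True in auto)
      then show ?thesis by simp
    next
      case False
      then show ?thesis using that(1) assms(1) unfolding CMP_def by simp
    qed
  qed
  obtain i0 where i0: "coeff h i0 \<noteq> 0" using assms(2) leading_coeff_neq_0 by blast
  have "inj_on (\<lambda>\<epsilon>. f + smult \<epsilon> h) {0<..Min R}"
  proof (rule inj_onI)
    fix \<epsilon> \<delta> assume "f + smult \<epsilon> h = f + smult \<delta> h"
    then have "\<epsilon> * coeff h i0 = \<delta> * coeff h i0" by (metis add_left_cancel coeff_smult)
    then show "\<epsilon> = \<delta>" using i0 by simp
  qed
  then have "infinite ((\<lambda>\<epsilon>. f + smult \<epsilon> h) ` {0<..Min R})"
    using \<open>0 < Min R\<close> finite_imageD by (metis greaterThanAtMost_empty_iff infinite_Ioc)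
  moreover have "(\<lambda>\<epsilon>. f + smult \<epsilon> h) ` {0<..Min R}
      \<subseteq> {g. CMP g \<and> (\<forall>z. poly h z = 0 \<longrightarrow> poly g z = poly f z)}"
    using CMP by auto
  ultimately show ?thesis using infinite_super by blast
qed

theorem infinite_CMP_interpolants:
  fixes f :: "real poly" and x :: "nat \<Rightarrow> real"
  assumes "CMP f" "\<forall>j\<in>{1..n}. 0 < x j" "inj_on x {1..n}" "n \<le> dfrak_poly f"
  shows "infinite {g. CMP g \<and> (\<forall>j\<in>{1..n}. poly g (x j) = poly f (x j))}"
proof -
  obtain h where h: "h \<noteq> 0" "\<forall>j\<in>{1..n}. poly h (x j) = 0" "\<forall>i. coeff h i < 0 \<longrightarrow> 0 < coeff f i"
    using exists_CMP_direction assms(2-4) by blast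
  have "{g. CMP g \<and> (\<forall>z. poly h z = 0 \<longrightarrow> poly g z = poly f z)}
      \<subseteq> {g. CMP g \<and> (\<forall>j\<in>{1..n}. poly g (x j) = poly f (x j))}"
    using h(2) by auto
  then show ?thesis using infinite_CMP_perturbations[OF assms(1) h(1,3)] infinite_super by blast
qed

theorem mainTheorem3:
  fixes n :: nat and a b :: "nat \<Rightarrow> real" and f :: "real poly"
  assumes apos: "\<And>i. i \<in> {1..n} \<Longrightarrow> a i > 0"
    and bnn: "\<And>i. i \<in> {1..n} \<Longrightarrow> b i \<ge> 0"
    and amono: "\<And>i j. i \<in> {1..n} \<Longrightarrow> j \<in> {1..n} \<Longrightarrow> i < j \<Longrightarrow> a i < a j"
    and fCMP: "CMP f"
    and finterp: "\<And>i. i \<in> {1..n} \<Longrightarrow> poly f (a i) = b i"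
  shows "(dfrak_poly f + 1 \<le> n \<longrightarrow>
            (\<forall>g. CMP g \<and> (\<forall>i\<in>{1..n}. poly g (a i) = b i) \<longrightarrow> g = f))
       \<and> (n \<le> dfrak_poly f \<longrightarrow>
            infinite {g. CMP g \<and> (\<forall>i\<in>{1..n}. poly g (a i) = b i)})"
proof -
  have inj: "inj_on a {1..n}"
  proof (rule linorder_inj_onI)
    fix i j assume "i < j" "i \<in> {1..n}" "j \<in> {1..n}"
    then show "a i \<noteq> a j" using amono[of i j] by simp
  qed auto
  have interp: "{g. CMP g \<and> (\<forall>i\<in>{1..n}. poly g (a i) = b i)}
      = {g. CMP g \<and> (\<forall>i\<in>{1..n}. poly g (a i) = poly f (a i))}"
    using finterp by auto
  show ?thesis
  proof (intro conjI impI allI)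
    fix g assume "dfrak_poly f + 1 \<le> n" "CMP g \<and> (\<forall>i\<in>{1..n}. poly g (a i) = b i)"
    then show "g = f" using CMP_interpolant_unique[OF fCMP _ inj, of g] apos finterp by auto
  next
    assume "n \<le> dfrak_poly f"
    then show "infinite {g. CMP g \<and> (\<forall>i\<in>{1..n}. poly g (a i) = b i)}"
      unfolding interp using infinite_CMP_interpolants[OF fCMP _ inj] apos by auto
  qed
qed

end
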